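(* Let $m\ge1$, let $\Sigma$ be a positive definite real $m\times m$ matrix and let $r\ge1$. For $a\ge 0$ define \[ D_{r,\Sigma,a}:=\inf_{\Lambda}\sup_{\Vert h\Vert\le a}\left\Vert \Lambda\left(\mathrm{N}(h,\Sigma)\right)-\mathrm{N}(\sqrt{r}\,h,\Sigma)\right\Vert_1, \qquad D_{r,\Sigma}:=\inf_{\Lambda}\sup_{h\in\mathbb{R}^m}\left\Vert \Lambda\left(\mathrm{N}(h,\Sigma)\right)-\mathrm{N}(\sqrt{r}\,h,\Sigma)\right\Vert_1, \] with infima over all Markov kernels $\Lambda$ from $\mathbb{R}^m$ to $\mathbb{R}^m$. Then $a\mapsto D_{r,\Sigma,a}$ is nondecreasing and \[ \lim_{a\to\infty}D_{r,\Sigma,a}=D_{r,\Sigma}. \]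
   Context: $\mathrm{N}(\mu,\Sigma)$ is the Gaussian distribution with mean $\mu$ and covariance $\Sigma$; $\Lambda(P)$ is the image of the distribution $P$ under the Markov kernel $\Lambda$; $\Vert\cdot\Vert_1$ is the total variation ($L^1$) norm. *)

theory Defs
  imports "HOL-Probability.Probability"
begin

definition pos_def_matrix :: "real^'m^'m \<Rightarrow> bool" where
  "pos_def_matrix S \<longleftrightarrow> transpose S = S \<and> (\<forall>x. x \<noteq> 0 \<longrightarrow> x \<bullet> (S *v x) > 0)"

definition gaussian :: "real^'m \<Rightarrow> real^'m^'m \<Rightarrow> (real^'m) measure" where
  "gaussian h S = density lborel (\<lambda>x. ennreal
      ((2 * pi) powr (- real CARD('m) / 2) * det S powr (- 1 / 2)
       * exp (- (1 / 2) * ((x - h) \<bullet> (matrix_inv S *v (x - h))))))"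

definition markov_kernels :: "(real^'m \<Rightarrow> (real^'m) measure) set" where
  "markov_kernels = {K. K \<in> borel \<rightarrow>\<^sub>M prob_algebra borel}"

definition kernel_image :: "(real^'m \<Rightarrow> (real^'m) measure) \<Rightarrow> (real^'m) measure \<Rightarrow> (real^'m) measure" where
  "kernel_image K P = P \<bind> K"

text \<open>Total variation (L1) norm of P - Q for probability measures:
  the L1 norm of the signed measure P - Q, i.e. 2 sup_A |P A - Q A|.\<close>
definition tv_norm :: "'a measure \<Rightarrow> 'a measure \<Rightarrow> real" where
  "tv_norm P Q = 2 * (SUP A \<in> sets P. \<bar>measure P A - measure Q A\<bar>)"

definition D_bounded :: "real \<Rightarrow> real^'m^'m \<Rightarrow> real \<Rightarrow> real" where
  "D_bounded r S a = (INF K \<in> markov_kernels. SUP h \<in> {h :: real^'m. norm h \<le> a}.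
      tv_norm (kernel_image K (gaussian h S)) (gaussian (sqrt r *\<^sub>R h) S))"

definition D_full :: "real \<Rightarrow> real^'m^'m \<Rightarrow> real" where
  "D_full r S = (INF K \<in> markov_kernels. SUP h \<in> (UNIV :: (real^'m) set).
      tv_norm (kernel_image K (gaussian h S)) (gaussian (sqrt r *\<^sub>R h) S))"

end

theory Submission
  imports Defs
begin

(* Monotonicity in a is immediate, since the supremum runs over growing balls.
   The experiments N(h, S) and the targets N(sqrt r h, S) are translation families of one finite
   measure P0. Given a kernel K that is good on the ball of radius b, randomise it: draw u uniformly
   from the ball, apply K at u and move the outcome by sqrt r (x - u). By Fubini the error of this
   kernel at an arbitrary h is an average of errors of K at points of the ball, except for the
   relative volume that a ball loses when it is moved by the noise z ~ P0. That loss is at most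
   m |z| / (2b) by Bernoulli's inequality, so its P0-average tends to 0 as b grows. *)

lemma measure_le_total_measure:
  assumes "finite_measure M"
  shows "measure M A \<le> measure M (space M)"
  using assms by (cases "A \<in> sets M") (auto intro: finite_measure.bounded_measure simp: measure_notin_sets)

lemma abs_measure_diff_le_total:
  assumes "finite_measure P" and "finite_measure Q"
  shows "\<bar>measure P A - measure Q A\<bar> \<le> measure P (space P) + measure Q (space Q)"
  using measure_le_total_measure[OF assms(1), of A] measure_le_total_measure[OF assms(2), of A]
    measure_nonneg[of P A] measure_nonneg[of Q A]
  by linarith

lemma bdd_above_abs_measure_diff:
  assumes "finite_measure P" and "finite_measure Q"
  shows "bdd_above ((\<lambda>A. \<bar>measure P A - measure Q A\<bar>) ` X)"
  using abs_measure_diff_le_total[OF assms] by (intro bdd_aboveI2)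

lemma tv_norm_nonneg:
  assumes "finite_measure P" and "finite_measure Q"
  shows "0 \<le> tv_norm P Q"
  using cSUP_upper[OF sets.empty_sets bdd_above_abs_measure_diff[OF assms]]
  unfolding tv_norm_def by simp

lemma tv_norm_le_total:
  assumes "finite_measure P" and "finite_measure Q"
  shows "tv_norm P Q \<le> 2 * (measure P (space P) + measure Q (space Q))"
proof -
  have "(SUP A \<in> sets P. \<bar>measure P A - measure Q A\<bar>) \<le> measure P (space P) + measure Q (space Q)"
    using abs_measure_diff_le_total[OF assms] by (intro cSUP_least) auto
  then show ?thesis
    unfolding tv_norm_def by simp
qed

lemma measure_le_tv_norm:
  assumes "finite_measure P" and "finite_measure Q" and "A \<in> sets P"
  shows "measure P A \<le> measure Q A + tv_norm P Q / 2"
  using cSUP_upper[OF assms(3) bdd_above_abs_measure_diff[OF assms(1,2)]]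
  unfolding tv_norm_def by linarith

text \<open>For measures of equal total mass a one-sided bound on all events suffices, because it also
  applies to the complements.\<close>

lemma tv_norm_le_if_measure_le:
  assumes P: "finite_measure P" and Q: "finite_measure Q" and sets_eq: "sets P = sets Q"
    and mass_eq: "measure P (space P) = measure Q (space Q)"
    and le: "\<And>A. A \<in> sets P \<Longrightarrow> measure P A \<le> measure Q A + d"
  shows "tv_norm P Q \<le> 2 * d"
proof -
  have space_eq: "space P = space Q"
    using sets_eq by (rule sets_eq_imp_space_eq)
  have "\<bar>measure P A - measure Q A\<bar> \<le> d" if A: "A \<in> sets P" for A
  proof -
    have "measure P (space P - A) = measure P (space P) - measure P A"
      using finite_measure.finite_measure_compl[OF P A] .
    moreover have "measure Q (space P - A) = measure Q (space Q) - measure Q A"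
      using finite_measure.finite_measure_compl[OF Q] A sets_eq space_eq by auto
    moreover have "space P - A \<in> sets P"
      using A by auto
    ultimately show ?thesis
      using le[OF A] le[of "space P - A"] mass_eq by (simp add: abs_le_iff)
  qed
  then have "(SUP A \<in> sets P. \<bar>measure P A - measure Q A\<bar>) \<le> d"
    by (intro cSUP_least) auto
  then show ?thesis
    unfolding tv_norm_def by simp
qed

lemma mono_on_tendsto_at_top:
  fixes f :: "real \<Rightarrow> real"
  assumes mono: "mono_on {0..} f" and le: "\<And>a. 0 \<le> a \<Longrightarrow> f a \<le> L"
    and close: "\<And>\<epsilon>. \<epsilon> > 0 \<Longrightarrow> \<exists>b\<ge>0. L \<le> f b + \<epsilon>"
  shows "(f \<longlongrightarrow> L) at_top"
proof (rule order_tendstoI)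
  fix y assume "y < L"
  then obtain b where b: "b \<ge> 0" and b_close: "L \<le> f b + (L - y) / 2"
    using close[of "(L - y) / 2"] by auto
  have "y < f a" if "b \<le> a" for a
  proof -
    have "y < L - (L - y) / 2"
      using \<open>y < L\<close> by (simp add: field_simps)
    also have "\<dots> \<le> f b"
      using b_close by simp
    also have "\<dots> \<le> f a"
      using mono_onD[OF mono] that b by simp
    finally show ?thesis .
  qed
  then show "\<forall>\<^sub>F a in at_top. y < f a"
    unfolding eventually_at_top_linorder by blast
next
  fix y assume "L < y"
  then show "\<forall>\<^sub>F a in at_top. f a < y"
    unfolding eventually_at_top_linorder using le by (intro exI[of _ 0]) (auto intro: le_less_trans)
qed

lemma markov_kernels_measurable: "K \<in> markov_kernels \<Longrightarrow> K \<in> borel \<rightarrow>\<^sub>M prob_algebra borel"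
  by (simp add: markov_kernels_def)

lemma prob_space_markov_kernel: "K \<in> markov_kernels \<Longrightarrow> prob_space (K x)"
  using measurable_space[OF markov_kernels_measurable, of K x] by (simp add: space_prob_algebra)

lemma sets_markov_kernel: "K \<in> markov_kernels \<Longrightarrow> sets (K x) = sets borel"
  using measurable_space[OF markov_kernels_measurable, of K x] by (simp add: space_prob_algebra)

lemma space_markov_kernel: "K \<in> markov_kernels \<Longrightarrow> space (K x) = UNIV"
  using sets_eq_imp_space_eq[OF sets_markov_kernel] by simp

lemma measurable_markov_kernel:
  "K \<in> markov_kernels \<Longrightarrow> f \<in> borel \<rightarrow>\<^sub>M N \<Longrightarrow> f \<in> K x \<rightarrow>\<^sub>M N"
  using measurable_cong_sets[OF sets_markov_kernel refl] by blast

lemma return_in_markov_kernels: "return borel \<in> markov_kernels"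
  unfolding markov_kernels_def by simp

lemma measurable_emeasure_markov_kernel_vimage:
  fixes s :: real and c :: "real^'m"
  assumes K: "K \<in> markov_kernels" and A: "A \<in> sets borel"
  shows "(\<lambda>(w, x). emeasure (K x) ((\<lambda>y. y - s *\<^sub>R w + c) -` A)) \<in> borel_measurable (borel \<Otimes>\<^sub>M borel)"
proof -
  note [measurable] = markov_kernels_measurable[OF K]
  define N where "N p = distr (K (snd p)) borel (\<lambda>y. y - s *\<^sub>R fst p + c)" for p :: "(real^'m) \<times> (real^'m)"
  have "N \<in> (borel \<Otimes>\<^sub>M borel) \<rightarrow>\<^sub>M prob_algebra borel"
    unfolding N_def by measurable
  then have "(\<lambda>p. emeasure (N p) A) \<in> borel_measurable (borel \<Otimes>\<^sub>M borel)"
    using A by (intro measurable_emeasure_kernel measurable_prob_algebraD)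
  moreover have "emeasure (N p) A = emeasure (K (snd p)) ((\<lambda>y. y - s *\<^sub>R fst p + c) -` A)" for p
    unfolding N_def using A
    by (subst emeasure_distr) (auto simp: space_markov_kernel[OF K] intro!: measurable_markov_kernel[OF K])
  ultimately show ?thesis
    by (simp add: case_prod_beta')
qed

definition translate_measure :: "'a::euclidean_space measure \<Rightarrow> 'a \<Rightarrow> 'a measure" where
  "translate_measure P h = distr P borel (\<lambda>z. z + h)"

lemma sets_translate_measure [simp]: "sets (translate_measure P h) = sets borel"
  by (simp add: translate_measure_def)

lemma space_translate_measure [simp]: "space (translate_measure P h) = UNIV"
  by (simp add: translate_measure_def)

locale translation_family =
  fixes P0 :: "(real^'m) measure"
  assumes finite_measure_P0: "finite_measure P0"
    and sets_P0 [measurable_cong]: "sets P0 = sets borel"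
begin

lemma space_P0: "space P0 = UNIV"
  using sets_eq_imp_space_eq[OF sets_P0] by simp

lemma emeasure_translate_measure:
  "A \<in> sets borel \<Longrightarrow> emeasure (translate_measure P0 h) A = emeasure P0 ((\<lambda>z. z + h) -` A)"
  unfolding translate_measure_def by (subst emeasure_distr) (auto simp: space_P0)

lemma emeasure_translate_measure_UNIV: "emeasure (translate_measure P0 h) UNIV = emeasure P0 UNIV"
  by (simp add: emeasure_translate_measure)

lemma finite_measure_translate_measure: "finite_measure (translate_measure P0 h)"
  unfolding translate_measure_def
  by (rule finite_measure.finite_measure_distr[OF finite_measure_P0]) simp

lemma measurable_markov_kernel_subprob:
  "K \<in> markov_kernels \<Longrightarrow> K \<in> translate_measure P0 h \<rightarrow>\<^sub>M subprob_algebra borel"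
  using measurable_prob_algebraD[OF markov_kernels_measurable]
  by (simp cong: measurable_cong_sets)

lemma sets_bind_translate_measure:
  assumes "K \<in> markov_kernels"
  shows "sets (translate_measure P0 h \<bind> K) = sets borel"
  using assms by (intro sets_bind_measurable measurable_markov_kernel_subprob) auto

lemma space_bind_translate_measure:
  "K \<in> markov_kernels \<Longrightarrow> space (translate_measure P0 h \<bind> K) = UNIV"
  using sets_eq_imp_space_eq[OF sets_bind_translate_measure] by simp

lemma emeasure_bind_translate_measure:
  assumes K: "K \<in> markov_kernels" and A: "A \<in> sets borel"
  shows "emeasure (translate_measure P0 h \<bind> K) A = (\<integral>\<^sup>+z. emeasure (K (z + h)) A \<partial>P0)"
proof -
  have "emeasure (translate_measure P0 h \<bind> K) A = (\<integral>\<^sup>+x. emeasure (K x) A \<partial>translate_measure P0 h)"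
    by (rule emeasure_bind[OF _ measurable_markov_kernel_subprob[OF K] A]) simp
  also have "\<dots> = (\<integral>\<^sup>+z. emeasure (K (z + h)) A \<partial>P0)"
    unfolding translate_measure_def
    by (rule nn_integral_distr)
      (auto intro: measurable_emeasure_kernel[OF measurable_prob_algebraD[OF markov_kernels_measurable[OF K]]] A)
  finally show ?thesis .
qed

lemma emeasure_bind_translate_measure_UNIV:
  assumes K: "K \<in> markov_kernels"
  shows "emeasure (translate_measure P0 h \<bind> K) UNIV = emeasure P0 UNIV"
proof -
  have "\<And>x. emeasure (K x) UNIV = 1"
    using prob_space.emeasure_space_1[OF prob_space_markov_kernel[OF K]]
    by (simp add: space_markov_kernel[OF K])
  then have "emeasure (translate_measure P0 h \<bind> K) UNIV = (\<integral>\<^sup>+z. 1 \<partial>P0)"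
    by (simp add: emeasure_bind_translate_measure[OF K])
  then show ?thesis
    by (simp add: space_P0)
qed

lemma finite_measure_bind_translate_measure:
  assumes K: "K \<in> markov_kernels"
  shows "finite_measure (translate_measure P0 h \<bind> K)"
  using finite_measure.emeasure_finite[OF finite_measure_P0, of UNIV]
  by (intro finite_measureI)
    (simp add: space_bind_translate_measure[OF K] emeasure_bind_translate_measure_UNIV[OF K] space_P0)

lemma emeasure_bind_translate_measure_le:
  assumes K: "K \<in> markov_kernels" and A: "A \<in> sets borel" and M: "0 \<le> M"
    and tv: "tv_norm (translate_measure P0 w \<bind> K) (translate_measure P0 t) \<le> M"
  shows "emeasure (translate_measure P0 w \<bind> K) A \<le> emeasure (translate_measure P0 t) A + ennreal (M / 2)"
proof -
  let ?P = "translate_measure P0 w \<bind> K" and ?Q = "translate_measure P0 t"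
  have P: "finite_measure ?P" and Q: "finite_measure ?Q"
    by (rule finite_measure_bind_translate_measure[OF K], rule finite_measure_translate_measure)
  have "measure ?P A \<le> measure ?Q A + tv_norm ?P ?Q / 2"
    using A by (intro measure_le_tv_norm[OF P Q]) (simp add: sets_bind_translate_measure[OF K])
  then have "measure ?P A \<le> measure ?Q A + M / 2"
    using tv by linarith
  then have "ennreal (measure ?P A) \<le> ennreal (measure ?Q A) + ennreal (M / 2)"
    using M by (simp add: ennreal_plus[symmetric] del: ennreal_plus)
  then show ?thesis
    by (simp add: finite_measure.emeasure_eq_measure[OF P] finite_measure.emeasure_eq_measure[OF Q])
qed

end

lemma cball_in_sets_borel [measurable]: "cball (c::'a::euclidean_space) r \<in> sets borel"
  by simp

lemma emeasure_lborel_cball_pos: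
  fixes c :: "'a::euclidean_space"
  assumes "b > 0"
  shows "0 < emeasure lborel (cball c b)"
  using assms by (simp add: emeasure_cball)

lemma uniform_measure_cball_in_prob_algebra:
  fixes c :: "'a::euclidean_space"
  assumes "b > 0"
  shows "uniform_measure lborel (cball c b) \<in> space (prob_algebra borel)"
  using prob_space_uniform_measure[of lborel "cball c b"] emeasure_lborel_cball_pos[OF assms, of c]
    emeasure_lborel_cball_finite[of c b]
  by (simp add: space_prob_algebra)

definition smoothed_kernel ::
  "(real^'m \<Rightarrow> (real^'m) measure) \<Rightarrow> real \<Rightarrow> real \<Rightarrow> real^'m \<Rightarrow> (real^'m) measure" where
  "smoothed_kernel K s b x =
     distr (uniform_measure lborel (cball 0 b) \<bind> (\<lambda>u. distr (K u) borel (\<lambda>y. y - s *\<^sub>R u)))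
       borel (\<lambda>y. y + s *\<^sub>R x)"

lemma recentred_markov_kernel_measurable:
  assumes "K \<in> markov_kernels"
  shows "(\<lambda>u. distr (K u) borel (\<lambda>y. y - s *\<^sub>R u)) \<in> borel \<rightarrow>\<^sub>M prob_algebra borel"
  using markov_kernels_measurable[OF assms] by measurable

lemma smoothed_kernel_mixture_in_prob_algebra:
  assumes "K \<in> markov_kernels" and "b > 0"
  shows "uniform_measure lborel (cball 0 b) \<bind> (\<lambda>u. distr (K u) borel (\<lambda>y. y - s *\<^sub>R u))
    \<in> space (prob_algebra borel)"
proof -
  note U = uniform_measure_cball_in_prob_algebra[OF assms(2)]
  note L = recentred_markov_kernel_measurable[OF assms(1)]
  show ?thesis
    using sets_bind'[OF U L] prob_space_bind'[OF U L] by (simp add: space_prob_algebra)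
qed

lemma smoothed_kernel_in_markov_kernels:
  assumes "K \<in> markov_kernels" and "b > 0"
  shows "smoothed_kernel K s b \<in> markov_kernels"
  unfolding markov_kernels_def smoothed_kernel_def mem_Collect_eq
  by (rule measurable_distr_prob_space2[OF measurable_const[OF smoothed_kernel_mixture_in_prob_algebra[OF assms]]])
    measurable

lemma emeasure_smoothed_kernel:
  fixes K :: "real^'m \<Rightarrow> (real^'m) measure"
  assumes K: "K \<in> markov_kernels" and b: "b > 0" and A [measurable]: "A \<in> sets borel"
  shows "emeasure (smoothed_kernel K s b x) A =
    (\<integral>\<^sup>+u. emeasure (K u) ((\<lambda>y. y - s *\<^sub>R u + s *\<^sub>R x) -` A) * indicator (cball 0 b) u \<partial>lborel)
      / emeasure lborel (cball (0::real^'m) b)"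
proof -
  define L where "L u = distr (K u) borel (\<lambda>y. y - s *\<^sub>R u)" for u
  define \<nu> where "\<nu> = uniform_measure lborel (cball 0 b) \<bind> L"
  have L [measurable]: "L \<in> borel \<rightarrow>\<^sub>M prob_algebra borel"
    unfolding L_def by (rule recentred_markov_kernel_measurable[OF K])
  have \<nu>: "\<nu> \<in> space (prob_algebra borel)"
    unfolding \<nu>_def L_def by (rule smoothed_kernel_mixture_in_prob_algebra[OF K b])
  then have sets_\<nu>: "sets \<nu> = sets borel"
    by (simp add: space_prob_algebra)
  have emeasure_L: "emeasure (L u) C = emeasure (K u) ((\<lambda>y. y - s *\<^sub>R u) -` C)"
    if "C \<in> sets borel" for u C
    unfolding L_def using that
    by (subst emeasure_distr) (auto simp: space_markov_kernel[OF K] intro!: measurable_markov_kernel[OF K])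
  have A_x [measurable]: "(\<lambda>y. y + s *\<^sub>R x) -` A \<in> sets borel"
    by (rule measurable_sets_borel[OF _ A]) measurable
  have "(\<lambda>y. y + s *\<^sub>R x) \<in> \<nu> \<rightarrow>\<^sub>M borel"
    unfolding measurable_cong_sets[OF sets_\<nu> refl] by measurable
  then have "emeasure (smoothed_kernel K s b x) A = emeasure \<nu> ((\<lambda>y. y + s *\<^sub>R x) -` A)"
    unfolding smoothed_kernel_def \<nu>_def[symmetric] L_def[abs_def, symmetric]
    by (subst emeasure_distr) (simp_all add: sets_eq_imp_space_eq[OF sets_\<nu>])
  also have "\<dots> = (\<integral>\<^sup>+u. emeasure (L u) ((\<lambda>y. y + s *\<^sub>R x) -` A) \<partial>uniform_measure lborel (cball 0 b))"
    unfolding \<nu>_def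
    by (rule emeasure_bind_prob_algebra[OF uniform_measure_cball_in_prob_algebra[OF b] L A_x])
  also have "\<dots> = (\<integral>\<^sup>+u. emeasure (L u) ((\<lambda>y. y + s *\<^sub>R x) -` A) * indicator (cball 0 b) u \<partial>lborel)
      / emeasure lborel (cball (0::real^'m) b)"
    by (subst nn_integral_uniform_measure)
      (auto intro!: measurable_emeasure_kernel[OF measurable_prob_algebraD[OF L]])
  also have "\<dots> = (\<integral>\<^sup>+u. emeasure (K u) ((\<lambda>y. y - s *\<^sub>R u + s *\<^sub>R x) -` A) * indicator (cball 0 b) u \<partial>lborel)
      / emeasure lborel (cball (0::real^'m) b)"
    by (simp add: emeasure_L vimage_def)
  finally show ?thesis .
qed

text \<open>The relative volume of the part of \<open>cball (-z) b\<close> outside \<open>cball 0 b\<close> (see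
  \<open>escape_fraction_eq\<close>), written in the integral form in which it arises from the smoothing.\<close>

definition escape_fraction :: "'a::euclidean_space \<Rightarrow> real \<Rightarrow> ennreal" where
  "escape_fraction z b =
     (\<integral>\<^sup>+w. indicator (cball 0 b) (z + w) * indicator (- cball 0 b) w \<partial>lborel) / emeasure lborel (cball (0::'a) b)"

lemma mem_cball_uminus:
  fixes z :: "'a::real_normed_vector"
  shows "w \<in> cball (- z) b \<longleftrightarrow> norm (z + w) \<le> b"
proof -
  have "- z - w = - (z + w)"
    by simp
  then show ?thesis
    by (simp only: mem_cball dist_norm norm_minus_cancel)
qed

lemma escape_fraction_eq:
  fixes z :: "'a::euclidean_space"
  shows "escape_fraction z b = emeasure lborel (cball (- z) b - cball 0 b) / emeasure lborel (cball (0::'a) b)"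
proof -
  have "indicator (cball 0 b) (z + w) * indicator (- cball 0 b) w
      = (indicator (cball (- z) b - cball 0 b) w :: ennreal)" for w
    by (simp add: indicator_def mem_cball_uminus del: mem_cball)
  then show ?thesis
    unfolding escape_fraction_def by simp
qed

lemma escape_fraction_le_1:
  fixes z :: "'a::euclidean_space"
  assumes "b > 0"
  shows "escape_fraction z b \<le> 1"
proof -
  have "emeasure lborel (cball (- z) b - cball 0 b) \<le> emeasure lborel (cball (- z) b)"
    by (intro emeasure_mono) auto
  also have "\<dots> = emeasure lborel (cball (0::'a) b)"
    using assms by (simp add: emeasure_cball)
  finally have "escape_fraction z b \<le> emeasure lborel (cball (0::'a) b) / emeasure lborel (cball (0::'a) b)"
    unfolding escape_fraction_eq by (rule divide_right_mono_ennreal)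
  also have "\<dots> = 1"
    using emeasure_lborel_cball_pos[OF assms, of "0::'a"] emeasure_lborel_cball_finite[of "0::'a" b]
    by (intro ennreal_divide_self) auto
  finally show ?thesis .
qed

lemma nn_integral_translated_cball_le:
  fixes F :: "'a::euclidean_space \<Rightarrow> ennreal"
  assumes F [measurable]: "F \<in> borel_measurable borel" and F_le_1: "\<And>w. F w \<le> 1"
  shows "(\<integral>\<^sup>+w. F w * indicator (cball 0 b) (z + w) \<partial>lborel) / emeasure lborel (cball (0::'a) b)
    \<le> (\<integral>\<^sup>+w. F w * indicator (cball 0 b) w \<partial>lborel) / emeasure lborel (cball (0::'a) b) + escape_fraction z b"
proof -
  define B where "B = cball (0::'a) b"
  have B [measurable]: "B \<in> sets borel"
    by (simp add: B_def)
  have "F w * indicator B (z + w) \<le> F w * indicator B w + indicator B (z + w) * indicator (- B) w" for w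
    using F_le_1[of w] by (cases "w \<in> B"; cases "z + w \<in> B") auto
  then have "(\<integral>\<^sup>+w. F w * indicator B (z + w) \<partial>lborel)
      \<le> (\<integral>\<^sup>+w. F w * indicator B w + indicator B (z + w) * indicator (- B) w \<partial>lborel)"
    by (intro nn_integral_mono)
  also have "\<dots> = (\<integral>\<^sup>+w. F w * indicator B w \<partial>lborel) + (\<integral>\<^sup>+w. indicator B (z + w) * indicator (- B) w \<partial>lborel)"
    by (rule nn_integral_add) measurable
  finally have "(\<integral>\<^sup>+w. F w * indicator B (z + w) \<partial>lborel) / emeasure lborel B
      \<le> ((\<integral>\<^sup>+w. F w * indicator B w \<partial>lborel)
        + (\<integral>\<^sup>+w. indicator B (z + w) * indicator (- B) w \<partial>lborel)) / emeasure lborel B"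
    by (rule divide_right_mono_ennreal)
  then show ?thesis
    unfolding escape_fraction_def B_def add_divide_distrib_ennreal .
qed

lemma cball_midpoint_subset:
  fixes z :: "'a::real_normed_vector"
  shows "cball (- ((1/2) *\<^sub>R z)) (b - norm z / 2) \<subseteq> cball 0 b \<inter> cball (- z) b"
proof
  fix w assume "w \<in> cball (- ((1/2) *\<^sub>R z)) (b - norm z / 2)"
  then have near: "norm (w + (1/2) *\<^sub>R z) \<le> b - norm z / 2"
    by (simp add: dist_norm norm_minus_commute add.commute)
  have norm_half: "norm ((1/2) *\<^sub>R z) = norm z / 2"
    by simp
  have "norm w \<le> norm (w + (1/2) *\<^sub>R z) + norm z / 2"
    using norm_triangle_ineq4[of "w + (1/2) *\<^sub>R z" "(1/2) *\<^sub>R z"] norm_half by simp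
  moreover have "norm (z + w) = norm ((w + (1/2) *\<^sub>R z) + (1/2) *\<^sub>R z)"
    by (rule arg_cong[where f = norm]) (simp add: algebra_simps scaleR_2[symmetric] flip: scaleR_add_left)
  then have "norm (z + w) \<le> norm (w + (1/2) *\<^sub>R z) + norm z / 2"
    by (metis norm_half norm_triangle_ineq)
  ultimately show "w \<in> cball 0 b \<inter> cball (- z) b"
    using near by (simp add: mem_cball_uminus del: mem_cball)
qed

text \<open>The escaping part misses the ball of \<open>cball_midpoint_subset\<close>, of radius \<open>b - |z|/2\<close>;
  Bernoulli's inequality bounds the volume of what remains.\<close>

lemma escape_fraction_le:
  fixes z :: "'a::euclidean_space"
  assumes b: "b > 0" and z: "norm z \<le> 2 * b"
  shows "escape_fraction z b \<le> ennreal (DIM('a) * norm z / (2 * b))"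
proof -
  define c where "c = b - norm z / 2"
  define C where "C = cball (- ((1/2) *\<^sub>R z)) c"
  define u where "u = unit_ball_vol DIM('a)"
  define n where "n = DIM('a)"
  have u: "u > 0" and c: "0 \<le> c" "c \<le> b"
    using z b by (auto simp: u_def c_def)
  have C_sub_0: "C \<subseteq> cball 0 b" and C_sub_z: "C \<subseteq> cball (- z) b"
    using cball_midpoint_subset[of z b] by (simp_all add: C_def c_def)
  have vol_ball: "emeasure lborel (cball (- z) b) = ennreal (u * b ^ n)"
    and vol_C: "emeasure lborel C = ennreal (u * c ^ n)"
    using b c by (simp_all add: emeasure_cball C_def u_def n_def)
  have "emeasure lborel (cball (- z) b - cball 0 b) \<le> emeasure lborel (cball (- z) b - C)"
    using C_sub_0 by (intro emeasure_mono) (auto simp: C_def)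
  also have "\<dots> = ennreal (u * b ^ n - u * c ^ n)"
    using C_sub_z vol_C u c
    by (subst emeasure_Diff) (auto simp: vol_ball C_def ennreal_minus)
  finally have "escape_fraction z b \<le> ennreal (u * b ^ n - u * c ^ n) / ennreal (u * b ^ n)"
    unfolding escape_fraction_eq using b by (simp add: emeasure_cball u_def n_def divide_right_mono_ennreal)
  also have "\<dots> = ennreal (1 - (c / b) ^ n)"
    using u b c by (subst divide_ennreal) (auto simp: field_simps power_divide power_mono)
  also have "1 - (c / b) ^ n \<le> n * norm z / (2 * b)"
  proof -
    have "1 + n * (- (norm z / (2 * b))) \<le> (1 + (- (norm z / (2 * b)))) ^ n"
      using z b by (intro Bernoulli_inequality) (simp add: field_simps)
    moreover have "1 + (- (norm z / (2 * b))) = c / b"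
      using b by (simp add: c_def field_simps)
    ultimately show ?thesis
      by simp
  qed
  finally show ?thesis
    by (simp add: n_def ennreal_leI)
qed

lemma escape_fraction_le_indicator:
  fixes z :: "'a::euclidean_space"
  assumes b: "b > 0" and R: "0 \<le> R" "R \<le> b"
  shows "escape_fraction z b \<le> indicator (- cball 0 R) z + ennreal (DIM('a) * R / (2 * b))"
proof (cases "z \<in> cball 0 R")
  case False
  then show ?thesis
    using escape_fraction_le_1[OF b, of z] by (simp add: add_increasing2)
next
  case True
  then have z: "norm z \<le> R"
    by simp
  have "escape_fraction z b \<le> ennreal (DIM('a) * norm z / (2 * b))"
    by (rule escape_fraction_le[OF b]) (use z R in simp)
  also have "\<dots> \<le> ennreal (DIM('a) * R / (2 * b))"
    using z b by (intro ennreal_leI divide_right_mono mult_left_mono) auto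
  finally show ?thesis
    using True by simp
qed

context translation_family
begin

lemma borel_measurable_nn_integral_lborel:
  fixes F :: "(real^'m) \<times> (real^'m) \<Rightarrow> ennreal"
  assumes "F \<in> borel_measurable (borel \<Otimes>\<^sub>M borel)"
  shows "(\<lambda>z. \<integral>\<^sup>+w. F (z, w) \<partial>lborel) \<in> borel_measurable P0"
proof -
  have "sets (borel \<Otimes>\<^sub>M lborel) = sets (borel \<Otimes>\<^sub>M (borel :: (real^'m) measure))"
    by (rule sets_pair_measure_cong) simp_all
  then have "F \<in> borel_measurable (borel \<Otimes>\<^sub>M lborel)"
    using assms measurable_cong_sets[of "borel \<Otimes>\<^sub>M lborel"] by blast
  from lborel.borel_measurable_nn_integral_fst[OF this] show ?thesis
    using measurable_cong_sets[OF sets_P0 refl] by simp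
qed

lemma borel_measurable_escape_fraction: "(\<lambda>z. escape_fraction z b) \<in> borel_measurable P0"
proof -
  have "(\<lambda>p. indicator (cball 0 b) (fst p + snd p) * indicator (- cball 0 b) (snd p) :: ennreal)
      \<in> borel_measurable (borel \<Otimes>\<^sub>M (borel :: (real^'m) measure))"
    by measurable
  from borel_measurable_nn_integral_lborel[OF this] show ?thesis
    unfolding escape_fraction_def by measurable
qed

lemma nn_integral_ball_average_le:
  fixes F :: "(real^'m) \<times> (real^'m) \<Rightarrow> ennreal"
  assumes F: "F \<in> borel_measurable (borel \<Otimes>\<^sub>M borel)" and b: "b > 0"
    and le: "\<And>w. w \<in> cball 0 b \<Longrightarrow> (\<integral>\<^sup>+z. F (z, w) \<partial>P0) \<le> c"
  shows "(\<integral>\<^sup>+z. (\<integral>\<^sup>+w. F (z, w) * indicator (cball 0 b) w \<partial>lborel) / emeasure lborel (cball (0::real^'m) b) \<partial>P0)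
    \<le> c"
proof -
  interpret P0: finite_measure P0
    by (rule finite_measure_P0)
  interpret pair_sigma_finite P0 lborel
    by (simp add: pair_sigma_finite_def P0.sigma_finite_measure_axioms lborel.sigma_finite_measure_axioms)
  define V where "V = emeasure lborel (cball (0::real^'m) b)"
  have V: "V \<noteq> 0" "V \<noteq> \<infinity>"
    using emeasure_lborel_cball_pos[OF b, of "0::real^'m"] emeasure_lborel_cball_finite[of "0::real^'m" b]
    unfolding V_def by auto
  define G where "G p = F p * indicator (cball 0 b) (snd p)" for p :: "(real^'m) \<times> (real^'m)"
  have G: "G \<in> borel_measurable (borel \<Otimes>\<^sub>M borel)"
    unfolding G_def using F by measurable
  have "sets (P0 \<Otimes>\<^sub>M lborel) = sets (borel \<Otimes>\<^sub>M (borel :: (real^'m) measure))"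
    by (rule sets_pair_measure_cong) (simp_all add: sets_P0)
  then have G': "(\<lambda>(z, w). G (z, w)) \<in> borel_measurable (P0 \<Otimes>\<^sub>M lborel)"
    using G measurable_cong_sets[of "P0 \<Otimes>\<^sub>M lborel"] by simp
  have "(\<integral>\<^sup>+z. (\<integral>\<^sup>+w. G (z, w) \<partial>lborel) \<partial>P0) = (\<integral>\<^sup>+w. (\<integral>\<^sup>+z. G (z, w) \<partial>P0) \<partial>lborel)"
    using Fubini'[OF G'] by simp
  also have "\<dots> \<le> (\<integral>\<^sup>+w. c * indicator (cball (0::real^'m) b) w \<partial>lborel)"
    by (intro nn_integral_mono) (auto simp: G_def le split: split_indicator)
  also have "\<dots> = c * V"
    unfolding V_def by (rule nn_integral_cmult_indicator) simp
  finally have "(\<integral>\<^sup>+z. (\<integral>\<^sup>+w. G (z, w) \<partial>lborel) \<partial>P0) / V \<le> c * V / V"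
    by (rule divide_right_mono_ennreal)
  then have "(\<integral>\<^sup>+z. (\<integral>\<^sup>+w. G (z, w) \<partial>lborel) / V \<partial>P0) \<le> c"
    using V by (simp add: nn_integral_divide[OF borel_measurable_nn_integral_lborel[OF G]] ennreal_mult_divide_eq)
  then show ?thesis
    by (simp add: G_def V_def)
qed

lemma nn_integral_markov_kernel_vimage_le:
  fixes K :: "real^'m \<Rightarrow> (real^'m) measure"
  assumes K: "K \<in> markov_kernels" and A: "A \<in> sets borel" and M: "0 \<le> M"
    and tv: "tv_norm (translate_measure P0 w \<bind> K) (translate_measure P0 (s *\<^sub>R w)) \<le> M"
  shows "(\<integral>\<^sup>+z. emeasure (K (z + w)) ((\<lambda>y. y - s *\<^sub>R w + s *\<^sub>R h) -` A) \<partial>P0)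
    \<le> emeasure (translate_measure P0 (s *\<^sub>R h)) A + ennreal (M / 2)"
proof -
  define Aw where "Aw = (\<lambda>y. y - s *\<^sub>R w + s *\<^sub>R h) -` A"
  have Aw: "Aw \<in> sets borel"
    unfolding Aw_def by (rule measurable_sets_borel[OF _ A]) measurable
  have "(\<integral>\<^sup>+z. emeasure (K (z + w)) Aw \<partial>P0) = emeasure (translate_measure P0 w \<bind> K) Aw"
    by (simp add: emeasure_bind_translate_measure[OF K Aw])
  also have "\<dots> \<le> emeasure (translate_measure P0 (s *\<^sub>R w)) Aw + ennreal (M / 2)"
    by (rule emeasure_bind_translate_measure_le[OF K Aw M tv])
  also have "emeasure (translate_measure P0 (s *\<^sub>R w)) Aw = emeasure (translate_measure P0 (s *\<^sub>R h)) A"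
    using A Aw by (simp add: emeasure_translate_measure Aw_def vimage_def algebra_simps)
  finally show ?thesis
    by (simp add: Aw_def)
qed

lemma emeasure_bind_smoothed_kernel:
  fixes K :: "real^'m \<Rightarrow> (real^'m) measure"
  assumes K: "K \<in> markov_kernels" and b: "b > 0" and A [measurable]: "A \<in> sets borel"
  shows "emeasure (translate_measure P0 h \<bind> smoothed_kernel K s b) A =
    (\<integral>\<^sup>+z. (\<integral>\<^sup>+w. emeasure (K (z + w)) ((\<lambda>y. y - s *\<^sub>R w + s *\<^sub>R h) -` A) * indicator (cball 0 b) (z + w) \<partial>lborel)
      / emeasure lborel (cball (0::real^'m) b) \<partial>P0)"
proof -
  have "emeasure (translate_measure P0 h \<bind> smoothed_kernel K s b) A
      = (\<integral>\<^sup>+z. emeasure (smoothed_kernel K s b (z + h)) A \<partial>P0)"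
    by (rule emeasure_bind_translate_measure[OF smoothed_kernel_in_markov_kernels[OF K b] A])
  also have "\<dots> = (\<integral>\<^sup>+z. (\<integral>\<^sup>+w. emeasure (K (z + w)) ((\<lambda>y. y - s *\<^sub>R w + s *\<^sub>R h) -` A)
      * indicator (cball 0 b) (z + w) \<partial>lborel) / emeasure lborel (cball (0::real^'m) b) \<partial>P0)"
  proof (rule nn_integral_cong)
    fix z :: "real^'m"
    define G where "G u = emeasure (K u) ((\<lambda>y. y - s *\<^sub>R u + s *\<^sub>R (z + h)) -` A) * indicator (cball 0 b) u"
      for u :: "real^'m"
    have "(\<lambda>u. (u, u)) \<in> borel \<rightarrow>\<^sub>M borel \<Otimes>\<^sub>M (borel :: (real^'m) measure)"
      by measurable
    from measurable_compose[OF this measurable_emeasure_markov_kernel_vimage[OF K A]]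
    have [measurable]: "(\<lambda>u. emeasure (K u) ((\<lambda>y. y - s *\<^sub>R u + s *\<^sub>R (z + h)) -` A)) \<in> borel_measurable borel"
      by simp
    have G: "G \<in> borel_measurable borel"
      unfolding G_def[abs_def] by measurable
    have "(\<integral>\<^sup>+u. G u \<partial>lborel) = (\<integral>\<^sup>+u. G u \<partial>distr lborel borel ((+) z))"
      by (simp add: lborel_distr_plus)
    also have "\<dots> = (\<integral>\<^sup>+w. G (z + w) \<partial>lborel)"
      using G by (intro nn_integral_distr) simp_all
    finally show "emeasure (smoothed_kernel K s b (z + h)) A = (\<integral>\<^sup>+w. emeasure (K (z + w))
        ((\<lambda>y. y - s *\<^sub>R w + s *\<^sub>R h) -` A) * indicator (cball 0 b) (z + w) \<partial>lborel)
        / emeasure lborel (cball (0::real^'m) b)"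
      by (simp add: emeasure_smoothed_kernel[OF K b A] G_def algebra_simps)
  qed
  finally show ?thesis .
qed

lemma emeasure_bind_smoothed_kernel_le:
  fixes K :: "real^'m \<Rightarrow> (real^'m) measure"
  assumes K: "K \<in> markov_kernels" and b: "b > 0" and A [measurable]: "A \<in> sets borel"
    and M: "\<And>w. w \<in> cball 0 b \<Longrightarrow> tv_norm (translate_measure P0 w \<bind> K) (translate_measure P0 (s *\<^sub>R w)) \<le> M"
  shows "emeasure (translate_measure P0 h \<bind> smoothed_kernel K s b) A
    \<le> emeasure (translate_measure P0 (s *\<^sub>R h)) A + ennreal (M / 2) + (\<integral>\<^sup>+z. escape_fraction z b \<partial>P0)"
proof -
  define B where "B = cball (0::real^'m) b"
  define V where "V = emeasure lborel B"
  have B [measurable]: "B \<in> sets borel"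
    by (simp add: B_def)
  define Aw where "Aw w = (\<lambda>y. y - s *\<^sub>R w + s *\<^sub>R h) -` A" for w
  define F where "F p = emeasure (K (fst p + snd p)) (Aw (snd p))" for p :: "(real^'m) \<times> (real^'m)"
  have "(\<lambda>p. (snd p, fst p + snd p)) \<in> borel \<Otimes>\<^sub>M borel \<rightarrow>\<^sub>M borel \<Otimes>\<^sub>M (borel :: (real^'m) measure)"
    by measurable
  from measurable_compose[OF this measurable_emeasure_markov_kernel_vimage[OF K A, of s "s *\<^sub>R h"]]
  have F [measurable]: "F \<in> borel_measurable (borel \<Otimes>\<^sub>M borel)"
    by (simp add: F_def[abs_def] Aw_def)
  have F_le_1: "F p \<le> 1" for p
    unfolding F_def by (rule prob_space.emeasure_le_1[OF prob_space_markov_kernel[OF K]])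
  have M_nonneg: "0 \<le> M"
    using tv_norm_nonneg[OF finite_measure_bind_translate_measure[OF K] finite_measure_translate_measure]
      M[of 0] b by (meson centre_in_cball less_imp_le order_trans)
  have averaged: "(\<integral>\<^sup>+z. F (z, w) \<partial>P0) \<le> emeasure (translate_measure P0 (s *\<^sub>R h)) A + ennreal (M / 2)"
    if "w \<in> cball 0 b" for w
    unfolding F_def Aw_def using nn_integral_markov_kernel_vimage_le[OF K A M_nonneg M[OF that]] by simp
  have split: "(\<integral>\<^sup>+w. F (z, w) * indicator B (z + w) \<partial>lborel) / V
      \<le> (\<integral>\<^sup>+w. F (z, w) * indicator B w \<partial>lborel) / V + escape_fraction z b" for z
    unfolding B_def V_def by (intro nn_integral_translated_cball_le F_le_1) measurable
  have "emeasure (translate_measure P0 h \<bind> smoothed_kernel K s b) A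
      = (\<integral>\<^sup>+z. (\<integral>\<^sup>+w. F (z, w) * indicator B (z + w) \<partial>lborel) / V \<partial>P0)"
    by (simp add: emeasure_bind_smoothed_kernel[OF K b A] F_def Aw_def B_def V_def)
  also have "\<dots> \<le> (\<integral>\<^sup>+z. (\<integral>\<^sup>+w. F (z, w) * indicator B w \<partial>lborel) / V + escape_fraction z b \<partial>P0)"
    by (intro nn_integral_mono split)
  also have "\<dots> = (\<integral>\<^sup>+z. (\<integral>\<^sup>+w. F (z, w) * indicator B w \<partial>lborel) / V \<partial>P0) + (\<integral>\<^sup>+z. escape_fraction z b \<partial>P0)"
  proof (rule nn_integral_add)
    have "(\<lambda>p. F p * indicator B (snd p)) \<in> borel_measurable (borel \<Otimes>\<^sub>M borel)"
      by measurable
    from borel_measurable_nn_integral_lborel[OF this]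
    show "(\<lambda>z. (\<integral>\<^sup>+w. F (z, w) * indicator B w \<partial>lborel) / V) \<in> borel_measurable P0"
      by measurable
  qed (rule borel_measurable_escape_fraction)
  also have "\<dots> \<le> emeasure (translate_measure P0 (s *\<^sub>R h)) A + ennreal (M / 2) + (\<integral>\<^sup>+z. escape_fraction z b \<partial>P0)"
    unfolding B_def V_def by (intro add_right_mono nn_integral_ball_average_le[OF F b averaged])
  finally show ?thesis .
qed

lemma measure_compl_cball_small:
  assumes "\<epsilon> > 0"
  shows "\<exists>R::nat. measure P0 (- cball 0 (real R)) < \<epsilon>"
proof -
  interpret P0: finite_measure P0
    by (rule finite_measure_P0)
  define T where "T n = - cball (0::real^'m) (real n)" for n
  have T_sets: "range T \<subseteq> sets P0"
    by (auto simp: T_def sets_P0)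
  have "decseq T"
    unfolding T_def decseq_def by (auto simp: subset_eq)
  moreover have "(\<Inter>n. T n) = {}"
  proof -
    have "z \<notin> T (nat \<lceil>norm z\<rceil>)" for z
      by (simp add: T_def real_nat_ceiling_ge)
    then show ?thesis
      by blast
  qed
  ultimately have "(\<lambda>n. measure P0 (T n)) \<longlonglongrightarrow> 0"
    using P0.finite_Lim_measure_decseq[OF T_sets] by simp
  then have "\<forall>\<^sub>F n in sequentially. measure P0 (T n) < \<epsilon>"
    using assms by (intro order_tendstoD) auto
  then show ?thesis
    by (auto simp: T_def eventually_sequentially)
qed

text \<open>Translates far away are rare under the finite measure \<open>P0\<close>, and nearby translates move a
  large ball only by a small fraction of its volume.\<close>

lemma nn_integral_escape_fraction_small:
  assumes eps: "\<epsilon> > 0"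
  shows "\<exists>b>0. (\<integral>\<^sup>+z. escape_fraction z b \<partial>P0) \<le> ennreal \<epsilon>"
proof -
  interpret P0: finite_measure P0
    by (rule finite_measure_P0)
  obtain R :: nat where R: "measure P0 (- cball 0 (real R)) < \<epsilon> / 2"
    using measure_compl_cball_small[of "\<epsilon> / 2"] eps by auto
  define T where "T = - cball (0::real^'m) (real R)"
  define m where "m = real DIM(real^'m)"
  define total where "total = measure P0 UNIV"
  define b where "b = m * R * total / \<epsilon> + R + 1"
  have m: "m \<ge> 0" and total: "total \<ge> 0"
    by (simp_all add: m_def total_def)
  have b: "b > 0" "real R \<le> b"
    using m total eps by (auto simp: b_def intro!: add_nonneg_pos)
  have small: "m * R / (2 * b) * total \<le> \<epsilon> / 2"
  proof -
    have "m * R * total / \<epsilon> \<le> b"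
      by (simp add: b_def)
    then have "m * R * total \<le> \<epsilon> * b"
      using eps by (simp add: field_simps)
    then show ?thesis
      using b eps by (simp add: field_simps)
  qed
  have escape: "escape_fraction z b \<le> indicator T z + ennreal (m * R / (2 * b))" for z :: "real^'m"
    unfolding T_def m_def using escape_fraction_le_indicator[where 'a = "real^'m", OF b(1) _ b(2)] by simp
  have "(\<integral>\<^sup>+z. escape_fraction z b \<partial>P0) \<le> (\<integral>\<^sup>+z. indicator T z + ennreal (m * R / (2 * b)) \<partial>P0)"
    by (intro nn_integral_mono escape)
  also have "\<dots> = emeasure P0 T + ennreal (m * R / (2 * b)) * emeasure P0 UNIV"
    by (simp add: nn_integral_add space_P0 T_def sets_P0)
  also have "\<dots> = ennreal (measure P0 T + m * R / (2 * b) * total)"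
    using m b total
    by (simp add: P0.emeasure_eq_measure total_def ennreal_mult[symmetric] ennreal_plus[symmetric]
        del: ennreal_plus)
  also have "\<dots> \<le> ennreal \<epsilon>"
    using R small unfolding T_def by (intro ennreal_leI) linarith
  finally show ?thesis
    using b by blast
qed

text \<open>With \<open>s = sqrt r\<close> and \<open>P0 = N(0, S)\<close>, \<open>deficiency s (cball 0 a)\<close> is \<open>D_bounded r S a\<close> and
  \<open>deficiency s UNIV\<close> is \<open>D_full r S\<close>.\<close>

definition kernel_error :: "real \<Rightarrow> (real^'m \<Rightarrow> (real^'m) measure) \<Rightarrow> real^'m \<Rightarrow> real" where
  "kernel_error s K h = tv_norm (translate_measure P0 h \<bind> K) (translate_measure P0 (s *\<^sub>R h))"

definition deficiency :: "real \<Rightarrow> (real^'m) set \<Rightarrow> real" where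
  "deficiency s X = (INF K \<in> markov_kernels. SUP h \<in> X. kernel_error s K h)"

lemma kernel_error_nonneg: "K \<in> markov_kernels \<Longrightarrow> 0 \<le> kernel_error s K h"
  unfolding kernel_error_def
  by (intro tv_norm_nonneg finite_measure_bind_translate_measure finite_measure_translate_measure)

lemma kernel_error_le: "K \<in> markov_kernels \<Longrightarrow> kernel_error s K h \<le> 4 * measure P0 UNIV"
  using tv_norm_le_total[OF finite_measure_bind_translate_measure finite_measure_translate_measure, of K h]
  by (simp add: kernel_error_def measure_def space_bind_translate_measure
      emeasure_bind_translate_measure_UNIV emeasure_translate_measure_UNIV)

lemma bdd_above_kernel_error: "K \<in> markov_kernels \<Longrightarrow> bdd_above (kernel_error s K ` X)"
  using kernel_error_le by (intro bdd_aboveI2) blast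

lemma kernel_error_le_SUP:
  "K \<in> markov_kernels \<Longrightarrow> h \<in> X \<Longrightarrow> kernel_error s K h \<le> (SUP h \<in> X. kernel_error s K h)"
  by (rule cSUP_upper[OF _ bdd_above_kernel_error])

lemma bdd_below_SUP_kernel_error:
  assumes "X \<noteq> {}"
  shows "bdd_below ((\<lambda>K. SUP h \<in> X. kernel_error s K h) ` markov_kernels)"
proof (rule bdd_belowI2)
  fix K :: "real^'m \<Rightarrow> (real^'m) measure"
  assume K: "K \<in> markov_kernels"
  obtain h where "h \<in> X"
    using assms by blast
  then show "0 \<le> (SUP h \<in> X. kernel_error s K h)"
    using kernel_error_le_SUP[OF K] kernel_error_nonneg[OF K] by (meson order_trans)
qed

lemma deficiency_le_SUP:
  "K \<in> markov_kernels \<Longrightarrow> X \<noteq> {} \<Longrightarrow> deficiency s X \<le> (SUP h \<in> X. kernel_error s K h)"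
  unfolding deficiency_def by (rule cINF_lower[OF bdd_below_SUP_kernel_error])

lemma deficiency_mono:
  assumes "X \<noteq> {}" and "X \<subseteq> Y"
  shows "deficiency s X \<le> deficiency s Y"
  unfolding deficiency_def[of s Y]
proof (rule cINF_greatest)
  show "markov_kernels \<noteq> {}"
    using return_in_markov_kernels by blast
next
  fix K :: "real^'m \<Rightarrow> (real^'m) measure"
  assume K: "K \<in> markov_kernels"
  have "deficiency s X \<le> (SUP h \<in> X. kernel_error s K h)"
    by (rule deficiency_le_SUP[OF K assms(1)])
  also have "\<dots> \<le> (SUP h \<in> Y. kernel_error s K h)"
    using assms by (intro cSUP_subset_mono bdd_above_kernel_error[OF K]) auto
  finally show "deficiency s X \<le> (SUP h \<in> Y. kernel_error s K h)" .
qed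

lemma kernel_error_smoothed_kernel_le:
  fixes K :: "real^'m \<Rightarrow> (real^'m) measure"
  assumes K: "K \<in> markov_kernels" and b: "b > 0"
    and M: "\<And>w. w \<in> cball 0 b \<Longrightarrow> kernel_error s K w \<le> M"
    and escape: "(\<integral>\<^sup>+z. escape_fraction z b \<partial>P0) \<le> ennreal \<delta>" and \<delta>: "0 \<le> \<delta>"
  shows "kernel_error s (smoothed_kernel K s b) h \<le> M + 2 * \<delta>"
proof -
  have K': "smoothed_kernel K s b \<in> markov_kernels"
    by (rule smoothed_kernel_in_markov_kernels[OF K b])
  let ?P = "translate_measure P0 h \<bind> smoothed_kernel K s b" and ?Q = "translate_measure P0 (s *\<^sub>R h)"
  have P: "finite_measure ?P" and Q: "finite_measure ?Q"
    by (rule finite_measure_bind_translate_measure[OF K'], rule finite_measure_translate_measure)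
  have M_nonneg: "0 \<le> M"
    using kernel_error_nonneg[OF K, of s 0] M[of 0] b by simp
  have "measure ?P A \<le> measure ?Q A + (M / 2 + \<delta>)" if A: "A \<in> sets ?P" for A
  proof -
    have A_borel: "A \<in> sets borel"
      using A by (simp add: sets_bind_translate_measure[OF K'])
    have "ennreal (measure ?P A) = emeasure ?P A"
      by (simp add: finite_measure.emeasure_eq_measure[OF P])
    also have "\<dots> \<le> emeasure ?Q A + ennreal (M / 2) + (\<integral>\<^sup>+z. escape_fraction z b \<partial>P0)"
      using M unfolding kernel_error_def by (rule emeasure_bind_smoothed_kernel_le[OF K b A_borel])
    also have "\<dots> \<le> emeasure ?Q A + ennreal (M / 2) + ennreal \<delta>"
      using escape by (rule add_left_mono)
    also have "\<dots> = ennreal (measure ?Q A + (M / 2 + \<delta>))"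
      using M_nonneg \<delta> by (simp add: finite_measure.emeasure_eq_measure[OF Q] ennreal_plus[symmetric] add.assoc
          del: ennreal_plus)
    finally show ?thesis
      using M_nonneg \<delta> by (subst (asm) ennreal_le_iff) (auto intro: add_nonneg_nonneg)
  qed
  then have "tv_norm ?P ?Q \<le> 2 * (M / 2 + \<delta>)"
    by (intro tv_norm_le_if_measure_le[OF P Q])
      (simp_all add: sets_bind_translate_measure[OF K'] measure_def space_bind_translate_measure[OF K']
        emeasure_bind_translate_measure_UNIV[OF K'] emeasure_translate_measure_UNIV)
  then show ?thesis
    by (simp add: kernel_error_def)
qed

lemma deficiency_UNIV_le_cball:
  assumes eps: "\<epsilon> > 0"
  shows "\<exists>b>0. deficiency s UNIV \<le> deficiency s (cball 0 b) + \<epsilon>"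
proof -
  obtain b where b: "b > 0" and escape: "(\<integral>\<^sup>+z. escape_fraction z b \<partial>P0) \<le> ennreal (\<epsilon> / 2)"
    using nn_integral_escape_fraction_small[of "\<epsilon> / 2"] eps by auto
  have "deficiency s UNIV - \<epsilon> \<le> (SUP h \<in> cball 0 b. kernel_error s K h)" if K: "K \<in> markov_kernels" for K
  proof -
    let ?M = "SUP h \<in> cball 0 b. kernel_error s K h"
    have "kernel_error s (smoothed_kernel K s b) h \<le> ?M + \<epsilon>" for h
      using kernel_error_smoothed_kernel_le[OF K b kernel_error_le_SUP[OF K] escape] eps by simp
    then have "(SUP h. kernel_error s (smoothed_kernel K s b) h) \<le> ?M + \<epsilon>"
      by (intro cSUP_least) auto
    moreover have "deficiency s UNIV \<le> (SUP h. kernel_error s (smoothed_kernel K s b) h)"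
      by (rule deficiency_le_SUP[OF smoothed_kernel_in_markov_kernels[OF K b]]) simp
    ultimately have "deficiency s UNIV \<le> ?M + \<epsilon>"
      by linarith
    then show ?thesis
      by simp
  qed
  then have "deficiency s UNIV - \<epsilon> \<le> deficiency s (cball 0 b)"
    unfolding deficiency_def[of s "cball 0 b"] using return_in_markov_kernels by (intro cINF_greatest) auto
  then show ?thesis
    using b by (intro exI[of _ b]) simp
qed

lemma deficiency_cball_tendsto:
  "mono_on {0..} (\<lambda>a. deficiency s (cball 0 a)) \<and> ((\<lambda>a. deficiency s (cball 0 a)) \<longlongrightarrow> deficiency s UNIV) at_top"
proof
  show mono: "mono_on {0..} (\<lambda>a. deficiency s (cball 0 a))"
    by (intro mono_onI deficiency_mono) auto
  show "((\<lambda>a. deficiency s (cball 0 a)) \<longlongrightarrow> deficiency s UNIV) at_top"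
  proof (rule mono_on_tendsto_at_top[OF mono])
    show "deficiency s (cball 0 a) \<le> deficiency s UNIV" if "0 \<le> a" for a
      using that by (intro deficiency_mono) auto
    show "\<exists>b\<ge>0. deficiency s UNIV \<le> deficiency s (cball 0 b) + \<epsilon>" if "\<epsilon> > 0" for \<epsilon>
      using deficiency_UNIV_le_cball[OF that] by (auto intro: less_imp_le)
  qed
qed

end

lemma nn_integral_exp_neg_sq_finite:
  fixes a :: real
  assumes "a > 0"
  shows "(\<integral>\<^sup>+t. ennreal (exp (- a * t\<^sup>2)) \<partial>lborel) < \<infinity>"
proof -
  define \<sigma> where "\<sigma> = 1 / sqrt (2 * a)"
  have \<sigma>: "\<sigma> > 0" "2 * \<sigma>\<^sup>2 = 1 / a"
    using assms by (auto simp: \<sigma>_def power_divide)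
  have "exp (- a * t\<^sup>2) = sqrt (2 * pi * \<sigma>\<^sup>2) * normal_density 0 \<sigma> t" for t
    using assms \<sigma> by (simp add: normal_density_def field_simps)
  then have "(\<integral>\<^sup>+t. ennreal (exp (- a * t\<^sup>2)) \<partial>lborel)
      = ennreal (sqrt (2 * pi * \<sigma>\<^sup>2)) * (\<integral>\<^sup>+t. ennreal (normal_density 0 \<sigma> t) \<partial>lborel)"
    by (simp add: ennreal_mult nn_integral_cmult)
  also have "(\<integral>\<^sup>+t. ennreal (normal_density 0 \<sigma> t) \<partial>lborel) = 1"
    using \<sigma>(1) by (subst nn_integral_eq_integral) auto
  finally show ?thesis
    by (simp add: ennreal_mult_less_top)
qed

lemma nn_integral_exp_neg_norm_sq_finite:
  fixes a :: real
  assumes "a > 0"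
  shows "(\<integral>\<^sup>+x. ennreal (exp (- a * (norm x)\<^sup>2)) \<partial>(lborel :: 'a::euclidean_space measure)) < \<infinity>"
proof -
  have "exp (- a * (norm x)\<^sup>2) = (\<Prod>b\<in>Basis. exp (- a * (x \<bullet> b)\<^sup>2))" for x :: 'a
    unfolding power2_norm_eq_inner euclidean_inner[of x x]
    by (simp add: power2_eq_square sum_distrib_left exp_sum[symmetric] sum_negf)
  then have "(\<integral>\<^sup>+x. ennreal (exp (- a * (norm x)\<^sup>2)) \<partial>(lborel :: 'a measure))
      = (\<integral>\<^sup>+x. (\<Prod>b\<in>Basis. ennreal (exp (- a * (x \<bullet> b)\<^sup>2))) \<partial>(lborel :: 'a measure))"
    by (simp add: prod_ennreal)
  also have "\<dots> = (\<Prod>b\<in>(Basis :: 'a set). \<integral>\<^sup>+t. ennreal (exp (- a * t\<^sup>2)) \<partial>lborel)"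
    by (rule nn_integral_lborel_prod) auto
  also have "\<dots> < \<infinity>"
    using nn_integral_exp_neg_sq_finite[OF assms] by (simp add: power_less_top_ennreal)
  finally show ?thesis .
qed

lemma pos_def_matrix_invertible:
  fixes S :: "real^'m^'m"
  assumes "pos_def_matrix S"
  shows "invertible S"
proof -
  have "inj ((*v) S)"
  proof (rule injI)
    fix x y assume "S *v x = S *v y"
    then have "(x - y) \<bullet> (S *v (x - y)) = 0"
      by (simp add: matrix_vector_mult_diff_distrib)
    then have "\<not> x - y \<noteq> 0"
      using assms unfolding pos_def_matrix_def by (metis less_irrefl)
    then show "x = y"
      by simp
  qed
  then show ?thesis
    using matrix_left_invertible_injective invertible_left_inverse by blast
qed

lemma matrix_mul_matrix_inv:
  fixes S :: "real^'m^'m"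
  assumes "invertible S"
  shows "S ** matrix_inv S = mat 1"
proof -
  have "\<exists>S'. S ** S' = mat 1 \<and> S' ** S = mat 1"
    using assms unfolding invertible_def .
  then have "S ** matrix_inv S = mat 1 \<and> matrix_inv S ** S = mat 1"
    unfolding matrix_inv_def by (rule someI_ex)
  then show ?thesis
    by blast
qed

lemma pos_def_matrix_inv_quadratic_pos:
  fixes S :: "real^'m^'m"
  assumes S: "pos_def_matrix S" and x: "x \<noteq> 0"
  shows "0 < x \<bullet> (matrix_inv S *v x)"
proof -
  define z where "z = matrix_inv S *v x"
  have Sz: "S *v z = x"
    using matrix_mul_matrix_inv[OF pos_def_matrix_invertible[OF S]]
    by (simp add: z_def matrix_vector_mul_assoc)
  then have "z \<noteq> 0"
    using x by auto
  then have "0 < z \<bullet> (S *v z)"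
    using S unfolding pos_def_matrix_def by blast
  then show ?thesis
    by (simp add: Sz z_def[symmetric] inner_commute)
qed

text \<open>A positive definite quadratic form attains a positive minimum on the unit sphere.\<close>

lemma quadratic_form_coercive:
  fixes A :: "real^'n^'n"
  assumes pos: "\<And>x. x \<noteq> 0 \<Longrightarrow> 0 < x \<bullet> (A *v x)"
  shows "\<exists>\<kappa>>0. \<forall>x. \<kappa> * (norm x)\<^sup>2 \<le> x \<bullet> (A *v x)"
proof -
  define q where "q x = x \<bullet> (A *v x)" for x :: "real^'n"
  have "continuous_on (sphere 0 1) q"
    unfolding q_def
    by (intro continuous_on_inner continuous_on_id linear_continuous_on matrix_vector_mul_bounded_linear)
  then obtain y0 where y0: "y0 \<in> sphere 0 1" and min: "\<And>y. y \<in> sphere 0 1 \<Longrightarrow> q y0 \<le> q y"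
    using continuous_attains_inf[of "sphere (0::real^'n) 1" q] by auto
  have "y0 \<noteq> 0"
    using y0 by auto
  then have "q y0 > 0"
    using pos by (simp add: q_def)
  moreover have "q y0 * (norm x)\<^sup>2 \<le> q x" for x
  proof (cases "x = 0")
    case False
    define u where "u = (1 / norm x) *\<^sub>R x"
    have "u \<in> sphere 0 1" and x_u: "x = norm x *\<^sub>R u"
      using False by (simp_all add: u_def)
    have "q x = (norm x)\<^sup>2 * q u"
      by (subst x_u) (simp add: q_def matrix_vector_mult_scaleR power2_eq_square)
    moreover have "q y0 * (norm x)\<^sup>2 \<le> q u * (norm x)\<^sup>2"
      using min[OF \<open>u \<in> sphere 0 1\<close>] by (rule mult_right_mono) simp
    ultimately show ?thesis
      by (simp add: mult.commute)
  qed (simp add: q_def)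
  ultimately show ?thesis
    unfolding q_def by blast
qed

lemma density_lborel_translate:
  fixes f :: "'a::euclidean_space \<Rightarrow> ennreal"
  assumes f [measurable]: "f \<in> borel_measurable borel"
  shows "density lborel (\<lambda>x. f (x - h)) = translate_measure (density lborel f) h"
proof (rule measure_eqI)
  fix A assume "A \<in> sets (density lborel (\<lambda>x. f (x - h)))"
  then have A [measurable]: "A \<in> sets borel"
    by simp
  have "emeasure (density lborel (\<lambda>x. f (x - h))) A = (\<integral>\<^sup>+x. f (x - h) * indicator A x \<partial>lborel)"
    by (subst emeasure_density) auto
  also have "\<dots> = (\<integral>\<^sup>+x. f (x - h) * indicator A x \<partial>distr lborel borel ((+) h))"
    by (simp add: lborel_distr_plus)
  also have "\<dots> = (\<integral>\<^sup>+y. f (h + y - h) * indicator A (h + y) \<partial>lborel)"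
    by (subst nn_integral_distr) auto
  also have "\<dots> = (\<integral>\<^sup>+y. f y * indicator ((\<lambda>z. z + h) -` A) y \<partial>lborel)"
    by (rule nn_integral_cong) (simp add: add.commute indicator_def)
  also have "\<dots> = emeasure (density lborel f) ((\<lambda>z. z + h) -` A)"
    by (subst emeasure_density) (auto intro: measurable_sets_borel[OF _ A])
  also have "\<dots> = emeasure (translate_measure (density lborel f) h) A"
    unfolding translate_measure_def by (subst emeasure_distr) auto
  finally show "emeasure (density lborel (\<lambda>x. f (x - h))) A = emeasure (translate_measure (density lborel f) h) A" .
qed (simp add: translate_measure_def)

lemma borel_measurable_quadratic_form [measurable]:
  fixes A :: "real^'n^'n"
  shows "(\<lambda>x. x \<bullet> (A *v x)) \<in> borel_measurable borel"
  by (intro borel_measurable_continuous_onI continuous_on_inner continuous_on_id linear_continuous_on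
      matrix_vector_mul_bounded_linear)

lemma gaussian_eq_translate:
  fixes S :: "real^'m^'m"
  shows "gaussian h S = translate_measure (gaussian 0 S) h"
proof -
  define f where "f x = ennreal ((2 * pi) powr (- real CARD('m) / 2) * det S powr (- 1 / 2)
      * exp (- (1 / 2) * (x \<bullet> (matrix_inv S *v x))))" for x :: "real^'m"
  have "f \<in> borel_measurable borel"
    unfolding f_def[abs_def] by measurable
  from density_lborel_translate[OF this, of h] show ?thesis
    unfolding gaussian_def f_def[abs_def] by simp
qed

lemma finite_measure_centred_gaussian:
  fixes S :: "real^'m^'m"
  assumes S: "pos_def_matrix S"
  shows "finite_measure (gaussian 0 S)"
proof -
  obtain \<kappa> where \<kappa>: "\<kappa> > 0" and quad: "\<And>x. \<kappa> * (norm x)\<^sup>2 \<le> x \<bullet> (matrix_inv S *v x)"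
    using quadratic_form_coercive[OF pos_def_matrix_inv_quadratic_pos[OF S]] by blast
  define C where "C = (2 * pi) powr (- real CARD('m) / 2) * det S powr (- 1 / 2)"
  have "C \<ge> 0"
    by (simp add: C_def)
  have bound: "C * exp (- (1 / 2) * (x \<bullet> (matrix_inv S *v x))) \<le> C * exp (- (\<kappa> / 2) * (norm x)\<^sup>2)" for x
  proof -
    have "exp (- (1 / 2) * (x \<bullet> (matrix_inv S *v x))) \<le> exp (- (\<kappa> / 2) * (norm x)\<^sup>2)"
      using quad[of x] by simp
    then show ?thesis
      using \<open>C \<ge> 0\<close> by (rule mult_left_mono)
  qed
  have "emeasure (gaussian 0 S) UNIV
      = (\<integral>\<^sup>+x. ennreal (C * exp (- (1 / 2) * (x \<bullet> (matrix_inv S *v x)))) \<partial>lborel)"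
    by (simp add: gaussian_def C_def emeasure_density)
  also have "\<dots> \<le> (\<integral>\<^sup>+x. ennreal C * ennreal (exp (- (\<kappa> / 2) * (norm x)\<^sup>2)) \<partial>(lborel :: (real^'m) measure))"
    using bound \<open>C \<ge> 0\<close> by (intro nn_integral_mono) (simp add: ennreal_mult[symmetric] ennreal_leI)
  also have "\<dots> = ennreal C * (\<integral>\<^sup>+x. ennreal (exp (- (\<kappa> / 2) * (norm x)\<^sup>2)) \<partial>(lborel :: (real^'m) measure))"
    by (rule nn_integral_cmult) measurable
  also have "\<dots> < \<infinity>"
    using nn_integral_exp_neg_norm_sq_finite[where 'a = "real^'m" and a = "\<kappa> / 2"] \<kappa>
    by (simp add: ennreal_mult_less_top)
  finally have "emeasure (gaussian 0 S) (space (gaussian 0 S)) \<noteq> \<infinity>"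
    by (simp add: gaussian_def)
  then show ?thesis
    by (rule finite_measureI)
qed

theorem lemma1:
  fixes S :: "real^'m^'m" and r :: real
  assumes "pos_def_matrix S" and "r \<ge> 1"
  shows "mono_on {0..} (\<lambda>a. D_bounded r S a)
     \<and> ((\<lambda>a. D_bounded r S a) \<longlongrightarrow> D_full r S) at_top"
proof -
  define P0 where "P0 = gaussian 0 S"
  interpret translation_family P0
    unfolding P0_def
    by (rule translation_family.intro[OF finite_measure_centred_gaussian[OF assms(1)]]) (simp add: gaussian_def)
  have gaussian: "gaussian h S = translate_measure P0 h" for h
    unfolding P0_def by (rule gaussian_eq_translate)
  have ball: "{h. norm h \<le> a} = cball 0 a" for a :: real
    by auto
  have "D_bounded r S a = deficiency (sqrt r) (cball 0 a)" for a
    by (simp add: D_bounded_def deficiency_def kernel_error_def kernel_image_def gaussian ball)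
  moreover have "D_full r S = deficiency (sqrt r) UNIV"
    by (simp add: D_full_def deficiency_def kernel_error_def kernel_image_def gaussian)
  ultimately show ?thesis
    using deficiency_cball_tendsto[of "sqrt r"] by simp
qed
end
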